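(* Let $\rho_0,\rho_1,\dots,\rho_n$ be density matrices on a finite-dimensional complex Hilbert space with $\rho_j\rho_0=\rho_0\rho_j=0$ for all $j=1,\dots,n$. Let $p_1,\dots,p_n\ge0$ with $\sum_j p_j=1$, $\epsilon\in[0,1]$, $\sigma_j=\epsilon\rho_0+(1-\epsilon)\rho_j$, $\rho=\sum_j p_j\rho_j$ and $\sigma=\sum_j p_j\sigma_j$. Suppose $\operatorname{tr}(\rho_j^2)\ge\operatorname{tr}(\sigma_j^2)$ for all $j$ and $\operatorname{tr}(\rho^2)\ge\operatorname{tr}(\sigma^2)$. Then $$\sum_{j=1}^n p_j\,\mathcal{F}_2(\rho_j,\sigma_j)=\mathcal{F}_2(\rho,\sigma)=1-\epsilon,$$ where $\mathcal{F}_2(\alpha,\beta)=\operatorname{tr}(\alpha\beta)/\max[\operatorname{tr}(\alpha^2),\operatorname{tr}(\beta^2)]$.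
   Context: A density matrix is a positive semidefinite operator of unit trace. *)

theory Defs
  imports "HOL-Analysis.Analysis"
begin

definition hermitian :: "complex^'n^'n \<Rightarrow> bool" where
  "hermitian A \<longleftrightarrow> (\<forall>i j. A$i$j = cnj (A$j$i))"

definition psd :: "complex^'n^'n \<Rightarrow> bool" where
  "psd A \<longleftrightarrow> hermitian A \<and>
     (\<forall>v :: complex^'n. 0 \<le> Re (\<Sum>i\<in>UNIV. cnj (v$i) * (A *v v)$i))"

definition density_matrix :: "complex^'n^'n \<Rightarrow> bool" where
  "density_matrix A \<longleftrightarrow> psd A \<and> trace A = 1"

text \<open>F_2(a,b) = tr(ab) / max(tr(a^2), tr(b^2)); these traces are real for Hermitian
  arguments, so we take real parts.\<close>
definition F2 :: "complex^'n^'n \<Rightarrow> complex^'n^'n \<Rightarrow> real" where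
  "F2 a b = Re (trace (a ** b)) / max (Re (trace (a ** a))) (Re (trace (b ** b)))"

end

theory Submission
  imports Defs
begin

text \<open>If \<open>A R = 0\<close> and \<open>S = \<epsilon> R + (1 - \<epsilon>) A\<close>, then \<open>tr(A S) = (1 - \<epsilon>) tr(A\<^sup>2)\<close>; when moreover
  \<open>A\<close> is at least as pure as \<open>S\<close>, the maximum in the denominator of \<open>F\<^sub>2(A, S)\<close> is \<open>tr(A\<^sup>2)\<close>,
  so \<open>F\<^sub>2(A, S) = 1 - \<epsilon>\<close>. This applies to every pair \<open>(\<rho>\<^sub>j, \<sigma>\<^sub>j)\<close>, and also to \<open>(\<rho>, \<sigma>)\<close>:
  the mixture \<open>\<rho>\<close> is still orthogonal to \<open>\<rho>\<^sub>0\<close>, and \<open>\<sigma> = \<epsilon> \<rho>\<^sub>0 + (1 - \<epsilon>) \<rho>\<close> because the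
  weights sum to one. The denominators are nonzero since \<open>tr(A\<^sup>2)\<close> is the squared
  Frobenius norm of a Hermitian \<open>A\<close>. Neither the signs of the weights nor the range of
  \<open>\<epsilon>\<close> play a role.\<close>

lemma matrix_add_rdistrib: "(A + B) ** C = A ** C + B ** C"
  by (vector matrix_matrix_mult_def sum.distrib[symmetric] field_simps)

lemma matrix_sum_mult_left: "(\<Sum>j\<in>S. f j) ** B = (\<Sum>j\<in>S. f j ** B)"
  by (induction S rule: infinite_finite_induct) (simp_all add: matrix_add_rdistrib)

lemma trace_scaleR: "trace (c *\<^sub>R (A :: 'a::real_algebra_1^'n^'n)) = c *\<^sub>R trace A"
  by (simp add: trace_def scaleR_sum_right)

lemma trace_sum: "trace (\<Sum>j\<in>S. f j) = (\<Sum>j\<in>S. trace (f j :: 'a::comm_semiring_1^'n^'n))"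
  by (induction S rule: infinite_finite_induct) (simp_all add: trace_add trace_0[unfolded mat_0])

lemma hermitian_add: "hermitian A \<Longrightarrow> hermitian B \<Longrightarrow> hermitian (A + B)"
  unfolding hermitian_def by (metis complex_cnj_add vector_add_component)

lemma hermitian_scaleR: "hermitian A \<Longrightarrow> hermitian (c *\<^sub>R A)"
  unfolding hermitian_def by (metis complex_cnj_scaleR vector_scaleR_component)

lemma hermitian_sum: "(\<And>j. j \<in> S \<Longrightarrow> hermitian (f j)) \<Longrightarrow> hermitian (\<Sum>j\<in>S. f j)"
proof (induction S rule: infinite_finite_induct)
  case (insert x F)
  then show ?case by (simp add: hermitian_add)
qed (simp_all add: hermitian_def)

lemma trace_mult_self_hermitian:
  assumes "hermitian A"
  shows "Re (trace (A ** A)) = (\<Sum>i\<in>UNIV. \<Sum>k\<in>UNIV. (cmod (A$i$k))\<^sup>2)"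
proof -
  have "Re (A$i$k * A$k$i) = (cmod (A$i$k))\<^sup>2" for i k
  proof -
    have "A$k$i = cnj (A$i$k)"
      using assms unfolding hermitian_def by blast
    then show ?thesis by (simp flip: complex_norm_square)
  qed
  then show ?thesis by (simp add: trace_def matrix_matrix_mult_def)
qed

lemma trace_mult_self_pos:
  assumes "hermitian A" and "trace A \<noteq> 0"
  shows "0 < Re (trace (A ** A))"
proof -
  obtain i where "A$i$i \<noteq> 0"
    using \<open>trace A \<noteq> 0\<close> unfolding trace_def by (meson sum.neutral)
  then have "0 < (\<Sum>k\<in>UNIV. (cmod (A$i$k))\<^sup>2)"
    by (intro sum_pos2[of UNIV i]) auto
  then have "0 < (\<Sum>i\<in>UNIV. \<Sum>k\<in>UNIV. (cmod (A$i$k))\<^sup>2)"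
    by (rule sum_pos2[OF finite UNIV_I]) (simp add: sum_nonneg)
  then show ?thesis
    using trace_mult_self_hermitian[OF \<open>hermitian A\<close>] by simp
qed

lemma density_matrix_hermitian: "density_matrix A \<Longrightarrow> hermitian A"
  by (simp add: density_matrix_def psd_def)

lemma density_matrix_trace_mult_self_pos:
  assumes "density_matrix A"
  shows "0 < Re (trace (A ** A))"
proof (rule trace_mult_self_pos)
  show "hermitian A" using assms by (rule density_matrix_hermitian)
  show "trace A \<noteq> 0" using assms by (simp add: density_matrix_def)
qed

lemma matrix_mult_scaleR_right:
  fixes A :: "'a::real_algebra_1^'n^'m"
  shows "A ** (c *\<^sub>R B) = c *\<^sub>R (A ** B)"
  by (simp add: matrix_scalar_ac scalar_matrix_assoc)

lemma trace_sum_scaleR_density_matrix: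
  assumes "\<And>j. j \<in> S \<Longrightarrow> density_matrix (A j)" and "sum p S = 1"
  shows "trace (\<Sum>j\<in>S. p j *\<^sub>R A j) = 1"
proof -
  have "trace (\<Sum>j\<in>S. p j *\<^sub>R A j) = (\<Sum>j\<in>S. p j *\<^sub>R 1)"
    using assms(1) by (simp add: trace_sum trace_scaleR density_matrix_def)
  with assms(2) show ?thesis
    by (simp flip: scaleR_sum_left)
qed

lemma F2_mix_orthogonal:
  fixes A R :: "complex^'n^'n" and e :: real
  defines "S \<equiv> e *\<^sub>R R + (1 - e) *\<^sub>R A"
  assumes "0 < Re (trace (A ** A))" and "A ** R = 0"
    and "Re (trace (S ** S)) \<le> Re (trace (A ** A))"
  shows "F2 A S = 1 - e"
proof -
  have "A ** S = (1 - e) *\<^sub>R (A ** A)"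
    using \<open>A ** R = 0\<close> by (simp add: S_def matrix_add_ldistrib matrix_mult_scaleR_right)
  then have "Re (trace (A ** S)) = (1 - e) * Re (trace (A ** A))"
    by (simp add: trace_scaleR)
  then show ?thesis
    using assms(2,4) by (simp add: F2_def max_def)
qed

lemma sum_scaleR_mix_const:
  fixes x :: "'a::real_vector"
  assumes "sum p S = 1"
  shows "(\<Sum>j\<in>S. p j *\<^sub>R (a *\<^sub>R x + b *\<^sub>R y j)) = a *\<^sub>R x + b *\<^sub>R (\<Sum>j\<in>S. p j *\<^sub>R y j)"
proof -
  have "(\<Sum>j\<in>S. p j *\<^sub>R (a *\<^sub>R x + b *\<^sub>R y j)) = (\<Sum>j\<in>S. p j *\<^sub>R a *\<^sub>R x) + (\<Sum>j\<in>S. b *\<^sub>R p j *\<^sub>R y j)"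
    by (simp add: scaleR_right_distrib sum.distrib mult.commute)
  also have "\<dots> = sum p S *\<^sub>R a *\<^sub>R x + b *\<^sub>R (\<Sum>j\<in>S. p j *\<^sub>R y j)"
    by (simp only: scaleR_sum_left scaleR_sum_right)
  finally show ?thesis using assms by simp
qed

theorem mainTheorem10:
  fixes rho :: "nat \<Rightarrow> complex^'n^'n" and p :: "nat \<Rightarrow> real"
    and n :: nat and \<epsilon> :: real
  assumes dens: "\<And>j. j \<le> n \<Longrightarrow> density_matrix (rho j)"
    and orth: "\<And>j. 1 \<le> j \<Longrightarrow> j \<le> n \<Longrightarrow> rho j ** rho 0 = 0 \<and> rho 0 ** rho j = 0"
    and pnn: "\<And>j. 1 \<le> j \<Longrightarrow> j \<le> n \<Longrightarrow> p j \<ge> 0"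
    and psum: "(\<Sum>j=1..n. p j) = 1"
    and eps: "0 \<le> \<epsilon>" "\<epsilon> \<le> 1"
    and pur_j: "\<And>j. 1 \<le> j \<Longrightarrow> j \<le> n \<Longrightarrow>
        Re (trace (rho j ** rho j)) \<ge>
        Re (trace ((\<epsilon> *\<^sub>R rho 0 + (1 - \<epsilon>) *\<^sub>R rho j) ** (\<epsilon> *\<^sub>R rho 0 + (1 - \<epsilon>) *\<^sub>R rho j)))"
    and pur: "Re (trace ((\<Sum>j=1..n. p j *\<^sub>R rho j) ** (\<Sum>j=1..n. p j *\<^sub>R rho j))) \<ge>
        Re (trace ((\<Sum>j=1..n. p j *\<^sub>R (\<epsilon> *\<^sub>R rho 0 + (1 - \<epsilon>) *\<^sub>R rho j)) **
                   (\<Sum>j=1..n. p j *\<^sub>R (\<epsilon> *\<^sub>R rho 0 + (1 - \<epsilon>) *\<^sub>R rho j))))"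
  shows "(\<Sum>j=1..n. p j * F2 (rho j) (\<epsilon> *\<^sub>R rho 0 + (1 - \<epsilon>) *\<^sub>R rho j)) =
           F2 (\<Sum>j=1..n. p j *\<^sub>R rho j) (\<Sum>j=1..n. p j *\<^sub>R (\<epsilon> *\<^sub>R rho 0 + (1 - \<epsilon>) *\<^sub>R rho j))
       \<and> F2 (\<Sum>j=1..n. p j *\<^sub>R rho j) (\<Sum>j=1..n. p j *\<^sub>R (\<epsilon> *\<^sub>R rho 0 + (1 - \<epsilon>) *\<^sub>R rho j)) = 1 - \<epsilon>"
proof -
  define r where "r = (\<Sum>j=1..n. p j *\<^sub>R rho j)"
  have sigma: "(\<Sum>j=1..n. p j *\<^sub>R (\<epsilon> *\<^sub>R rho 0 + (1 - \<epsilon>) *\<^sub>R rho j)) = \<epsilon> *\<^sub>R rho 0 + (1 - \<epsilon>) *\<^sub>R r"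
    unfolding r_def using psum by (rule sum_scaleR_mix_const)
  have F2_j: "F2 (rho j) (\<epsilon> *\<^sub>R rho 0 + (1 - \<epsilon>) *\<^sub>R rho j) = 1 - \<epsilon>" if "j \<in> {1..n}" for j
    using that dens orth pur_j by (intro F2_mix_orthogonal density_matrix_trace_mult_self_pos) auto
  have "trace r = 1"
    unfolding r_def using dens psum by (intro trace_sum_scaleR_density_matrix) auto
  moreover have "hermitian r"
    unfolding r_def using dens by (intro hermitian_sum hermitian_scaleR density_matrix_hermitian) auto
  moreover have "r ** rho 0 = 0"
    unfolding r_def matrix_sum_mult_left using orth
    by (intro sum.neutral) (auto simp flip: scalar_matrix_assoc)
  moreover have "Re (trace ((\<epsilon> *\<^sub>R rho 0 + (1 - \<epsilon>) *\<^sub>R r) ** (\<epsilon> *\<^sub>R rho 0 + (1 - \<epsilon>) *\<^sub>R r)))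
      \<le> Re (trace (r ** r))"
    using pur unfolding sigma r_def[symmetric] .
  ultimately have "F2 r (\<epsilon> *\<^sub>R rho 0 + (1 - \<epsilon>) *\<^sub>R r) = 1 - \<epsilon>"
    by (intro F2_mix_orthogonal trace_mult_self_pos) auto
  moreover have "(\<Sum>j=1..n. p j * F2 (rho j) (\<epsilon> *\<^sub>R rho 0 + (1 - \<epsilon>) *\<^sub>R rho j)) = 1 - \<epsilon>"
    using psum by (simp add: F2_j flip: sum_distrib_right)
  ultimately show ?thesis
    unfolding sigma r_def by simp
qed

end
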